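(* Let $\mathcal{X}$ be a state space and let $C:\mathcal{X}\to U$ be the ground-truth meta-state mapping of a Meta-Causal Graph $\{\mathcal{G}_u\}_{u\in U}$ on variables $X=\{X_i\}_{i\in[p]}$, whose causal skeleton matrices satisfy $M_u\neq M_{u'}$ for all $u\neq u'$. Assume the Mixed Data Structure Learning assumption stated in the context. If the learned mapping $\hat C:\mathcal{X}\to\hat U$ satisfies $|\hat U|>|U|$, then $\hat C$ is observationally equivalent to $C$: there exists a mapping $\phi:\hat U\to U$ with $C(x)=\phi(\hat C(x))$ for all $x\in\mathcal{X}$.
   Context: A Meta-Causal Graph consists of a finite set $U$ of meta states, for each $u\in U$ a DAG $\mathcal{G}_u$ on vertex set $[p]$ with causal skeleton matrix $M_u\in\{0,1\}^{p\times p}$ ($M_u[i,j]=1$ iff $i$ is a parent of $j$ in $\mathcal{G}_u$), and a ground-truth mapping $C:\mathcal{X}\to U$; skeleton matrices of distinct meta states are distinct. Each sample $x$ is generated from $\mathcal{G}_{C(x)}$. Mixed Data Structure Learning assumption: for any dataset $\mathcal{D}$ whose samples come from the subgraphs indexed by $S_{\mathcal{D}}\subseteq U$, learning a single causal graph $\hat{\mathcal{G}}$ from $\mathcal{D}$ yields $\mathrm{Pa}_{\hat{\mathcal{G}}}(X_j)=\bigcup_{u\in S_{\mathcal{D}}}\mathrm{Pa}_{\mathcal{G}_u}(X_j)$ for all $j\in[p]$ (learned skeleton = entrywise OR of the contributing $M_u$). Learned mapping: for a candidate $\hat C:\mathcal{X}\to\hat U$, for each $\hat u$ a skeleton $\hat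 M_{\hat u}$ is learned from the pooled samples $\{x:\hat C(x)=\hat u\}$, and the learned mapping is one selected by the learning procedure as minimizing the expected structural complexity $\mathbb{E}_x\big[\|\hat M_{\hat C(x)}\|_1\big]$ over such mappings. Two mappings $C_1:\mathcal{X}\to U_1$, $C_2:\mathcal{X}\to U_2$ are observationally equivalent if there is a map $\phi:U_1\to U_2$ with $C_2(x)=\phi(C_1(x))$ for all $x$. *)

theory Defs
  imports Complex_Main "HOL-Library.FuncSet"
begin

text \<open>A causal skeleton matrix on vertex set [p] = {0..<p}:
  M i j = True iff i is a parent of j. Entries outside [p] are required to be False.\<close>
type_synonym skeleton = "nat \<Rightarrow> nat \<Rightarrow> bool"

definition well_formed_skel :: "nat \<Rightarrow> skeleton \<Rightarrow> bool" where
  "well_formed_skel p M \<longleftrightarrow> (\<forall>i j. M i j \<longrightarrow> i < p \<and> j < p)"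

definition is_dag :: "nat \<Rightarrow> skeleton \<Rightarrow> bool" where
  "is_dag p M \<longleftrightarrow> acyclic {(i, j). i < p \<and> j < p \<and> M i j}"

definition skel_norm :: "nat \<Rightarrow> skeleton \<Rightarrow> nat" where
  "skel_norm p M = card {(i, j). i < p \<and> j < p \<and> M i j}"

definition meta_causal_graph ::
  "nat \<Rightarrow> 'u set \<Rightarrow> ('u \<Rightarrow> skeleton) \<Rightarrow> 'x set \<Rightarrow> ('x \<Rightarrow> 'u) \<Rightarrow> bool" where
  "meta_causal_graph p U M Xs C \<longleftrightarrow>
     finite U \<and>
     (\<forall>u\<in>U. well_formed_skel p (M u) \<and> is_dag p (M u)) \<and>
     (\<forall>u\<in>U. \<forall>u'\<in>U. u \<noteq> u' \<longrightarrow> M u \<noteq> M u') \<and>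
     (\<forall>x\<in>Xs. C x \<in> U)"

definition mixed_data_structure_learning ::
  "nat \<Rightarrow> ('u \<Rightarrow> skeleton) \<Rightarrow> 'x set \<Rightarrow> ('x \<Rightarrow> 'u) \<Rightarrow> ('x set \<Rightarrow> skeleton) \<Rightarrow> bool" where
  "mixed_data_structure_learning p M Xs C learn \<longleftrightarrow>
     (\<forall>D. D \<subseteq> Xs \<and> D \<noteq> {} \<longrightarrow>
        (\<forall>i<p. \<forall>j<p. learn D i j \<longleftrightarrow> (\<exists>u\<in>C ` D. M u i j)))"

definition learned_skel ::
  "('x set \<Rightarrow> skeleton) \<Rightarrow> 'x set \<Rightarrow> ('x \<Rightarrow> 'v) \<Rightarrow> 'v \<Rightarrow> skeleton" where
  "learned_skel learn Xs Ch v = learn {y \<in> Xs. Ch y = v}"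

definition expected_complexity ::
  "nat \<Rightarrow> ('x set \<Rightarrow> skeleton) \<Rightarrow> 'x set \<Rightarrow> ('x \<Rightarrow> real) \<Rightarrow> ('x \<Rightarrow> 'v) \<Rightarrow> real" where
  "expected_complexity p learn Xs w Ch =
     (\<Sum>x\<in>Xs. w x * real (skel_norm p (learned_skel learn Xs Ch (Ch x))))"

definition learned_mapping ::
  "nat \<Rightarrow> ('x set \<Rightarrow> skeleton) \<Rightarrow> 'x set \<Rightarrow> ('x \<Rightarrow> real) \<Rightarrow> 'v set \<Rightarrow> ('x \<Rightarrow> 'v) \<Rightarrow> bool" where
  "learned_mapping p learn Xs w Vh Ch \<longleftrightarrow>
     Ch \<in> Xs \<rightarrow> Vh \<and>
     (\<forall>Ch'. Ch' \<in> Xs \<rightarrow> Vh \<longrightarrow>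
        expected_complexity p learn Xs w Ch \<le> expected_complexity p learn Xs w Ch')"

definition obs_equiv ::
  "'x set \<Rightarrow> 'a set \<Rightarrow> ('x \<Rightarrow> 'a) \<Rightarrow> 'b set \<Rightarrow> ('x \<Rightarrow> 'b) \<Rightarrow> bool" where
  "obs_equiv Xs U1 C1 U2 C2 \<longleftrightarrow> (\<exists>\<phi>. \<phi> \<in> U1 \<rightarrow> U2 \<and> (\<forall>x\<in>Xs. C2 x = \<phi> (C1 x)))"

end

theory Submission
  imports Defs
begin

text \<open>Every learned skeleton contains the true skeleton of each of its samples, so the
  expected complexity of any mapping is at least that of the ground truth C, and this bound
  is attained by g \<circ> C for any injection g of U into the learned states. A minimizer
  therefore meets the bound with equality; since all weights are positive, every learned
  skeleton equals the true skeleton of each of its samples. Samples sharing a learned state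
  thus share a skeleton, hence, skeletons being distinct, a meta state, so C factors through
  the learned mapping.\<close>

definition skel_edges :: "nat \<Rightarrow> skeleton \<Rightarrow> (nat \<times> nat) set" where
  "skel_edges p M = {(i, j). i < p \<and> j < p \<and> M i j}"

lemma finite_skel_edges: "finite (skel_edges p M)"
proof (rule finite_subset)
  show "skel_edges p M \<subseteq> {..<p} \<times> {..<p}" by (auto simp: skel_edges_def)
qed simp

lemma skel_norm_eq_card_skel_edges: "skel_norm p M = card (skel_edges p M)"
  by (simp add: skel_norm_def skel_edges_def)

lemma well_formed_skel_eqI:
  assumes "well_formed_skel p M" "well_formed_skel p M'"
    and "skel_edges p M = skel_edges p M'"
  shows "M = M'"
proof (intro ext)
  fix i j
  have "M i j \<longleftrightarrow> (i, j) \<in> skel_edges p M" "M' i j \<longleftrightarrow> (i, j) \<in> skel_edges p M'"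
    using assms(1,2) by (auto simp: well_formed_skel_def skel_edges_def)
  then show "M i j = M' i j" using assms(3) by simp
qed

lemma skel_edges_learned_skel:
  assumes "mixed_data_structure_learning p M Xs C learn" and "x \<in> Xs"
  shows "skel_edges p (learned_skel learn Xs Ch (Ch x)) =
    (\<Union>y\<in>{y \<in> Xs. Ch y = Ch x}. skel_edges p (M (C y)))"
proof -
  have "{y \<in> Xs. Ch y = Ch x} \<subseteq> Xs" "{y \<in> Xs. Ch y = Ch x} \<noteq> {}"
    using assms(2) by auto
  then have "\<forall>i<p. \<forall>j<p. learn {y \<in> Xs. Ch y = Ch x} i j \<longleftrightarrow>
      (\<exists>u\<in>C ` {y \<in> Xs. Ch y = Ch x}. M u i j)"
    using assms(1) unfolding mixed_data_structure_learning_def by blast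
  then show ?thesis by (auto simp: skel_edges_def learned_skel_def)
qed

lemma skel_edges_subset_learned_skel:
  assumes "mixed_data_structure_learning p M Xs C learn" and "x \<in> Xs"
  shows "skel_edges p (M (C x)) \<subseteq> skel_edges p (learned_skel learn Xs Ch (Ch x))"
  using assms by (auto simp: skel_edges_learned_skel)

lemma skel_edges_learned_skel_ground_truth:
  assumes "mixed_data_structure_learning p M Xs C learn" and "x \<in> Xs"
  shows "skel_edges p (learned_skel learn Xs C (C x)) = skel_edges p (M (C x))"
  using assms by (auto simp: skel_edges_learned_skel)

lemma skel_norm_learned_skel_ground_truth_le:
  assumes "mixed_data_structure_learning p M Xs C learn" and "x \<in> Xs"
  shows "skel_norm p (learned_skel learn Xs C (C x))
    \<le> skel_norm p (learned_skel learn Xs Ch (Ch x))"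
  unfolding skel_norm_eq_card_skel_edges skel_edges_learned_skel_ground_truth[OF assms]
  by (rule card_mono[OF finite_skel_edges skel_edges_subset_learned_skel[OF assms]])

lemma expected_complexity_ground_truth_le:
  assumes "mixed_data_structure_learning p M Xs C learn" and "\<forall>x\<in>Xs. w x > 0"
  shows "expected_complexity p learn Xs w C \<le> expected_complexity p learn Xs w Ch"
  unfolding expected_complexity_def
  using assms skel_norm_learned_skel_ground_truth_le[OF assms(1)]
  by (intro sum_mono) (simp add: less_imp_le)

lemma expected_complexity_comp_inj:
  assumes "inj_on g U" and "C \<in> Xs \<rightarrow> U"
  shows "expected_complexity p learn Xs w (g \<circ> C) = expected_complexity p learn Xs w C"
proof -
  have "{y \<in> Xs. g (C y) = g (C x)} = {y \<in> Xs. C y = C x}" if "x \<in> Xs" for x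
    using assms that by (auto dest: inj_onD)
  then show ?thesis
    by (auto simp: expected_complexity_def learned_skel_def intro!: sum.cong)
qed

lemma sum_pos_weighted_eq_imp_eq:
  fixes f g w :: "'a \<Rightarrow> real"
  assumes "finite A" and "\<forall>x\<in>A. w x > 0" and "\<forall>x\<in>A. f x \<le> g x"
    and "(\<Sum>x\<in>A. w x * f x) = (\<Sum>x\<in>A. w x * g x)" and "x \<in> A"
  shows "f x = g x"
proof -
  have "(\<Sum>y\<in>A. w y * (g y - f y)) = (\<Sum>y\<in>A. w y * g y) - (\<Sum>y\<in>A. w y * f y)"
    by (simp add: right_diff_distrib sum_subtractf)
  then have "(\<Sum>y\<in>A. w y * (g y - f y)) = 0"
    using assms(4) by simp
  moreover have "0 \<le> w y * (g y - f y)" if "y \<in> A" for y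
    using assms(2,3) that by (simp add: less_imp_le)
  ultimately have "w x * (g x - f x) = 0"
    using sum_nonneg_eq_0_iff[OF assms(1), of "\<lambda>y. w y * (g y - f y)"] assms(5) by simp
  then show ?thesis using assms(2,5) by force
qed

lemma learned_mapping_skel_edges:
  assumes mcg: "meta_causal_graph p U M Xs C"
    and mdl: "mixed_data_structure_learning p M Xs C learn"
    and "finite Xs" and w_pos: "\<forall>x\<in>Xs. w x > 0"
    and "finite Uh" and "card U \<le> card Uh"
    and learned: "learned_mapping p learn Xs w Uh Ch"
    and "x \<in> Xs"
  shows "skel_edges p (learned_skel learn Xs Ch (Ch x)) = skel_edges p (M (C x))"
proof -
  have C_Pi: "C \<in> Xs \<rightarrow> U" and "finite U"
    using mcg by (auto simp: meta_causal_graph_def)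
  then obtain g where g: "g ` U \<subseteq> Uh" "inj_on g U"
    using card_le_inj[OF \<open>finite U\<close> assms(5,6)] by blast
  have "g \<circ> C \<in> Xs \<rightarrow> Uh" using g(1) C_Pi by (auto simp: Pi_iff)
  with learned
  have "expected_complexity p learn Xs w Ch \<le> expected_complexity p learn Xs w (g \<circ> C)"
    unfolding learned_mapping_def by blast
  then have "expected_complexity p learn Xs w Ch \<le> expected_complexity p learn Xs w C"
    by (simp only: expected_complexity_comp_inj[OF g(2) C_Pi])
  with expected_complexity_ground_truth_le[OF mdl w_pos]
  have "expected_complexity p learn Xs w C = expected_complexity p learn Xs w Ch"
    by (rule antisym)
  then have "real (skel_norm p (learned_skel learn Xs C (C x)))
      = real (skel_norm p (learned_skel learn Xs Ch (Ch x)))"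
    by (intro sum_pos_weighted_eq_imp_eq[OF \<open>finite Xs\<close> w_pos _ _ \<open>x \<in> Xs\<close>,
          where f = "\<lambda>y. real (skel_norm p (learned_skel learn Xs C (C y)))"
            and g = "\<lambda>y. real (skel_norm p (learned_skel learn Xs Ch (Ch y)))"])
      (simp_all add: expected_complexity_def skel_norm_learned_skel_ground_truth_le[OF mdl])
  then have "card (skel_edges p (M (C x)))
      = card (skel_edges p (learned_skel learn Xs Ch (Ch x)))"
    by (simp add: skel_norm_eq_card_skel_edges
        skel_edges_learned_skel_ground_truth[OF mdl \<open>x \<in> Xs\<close>])
  with skel_edges_subset_learned_skel[OF mdl \<open>x \<in> Xs\<close>] show ?thesis
    by (intro card_subset_eq[OF finite_skel_edges, symmetric])
qed

lemma learned_mapping_separates_meta_states: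
  assumes mcg: "meta_causal_graph p U M Xs C"
    and mdl: "mixed_data_structure_learning p M Xs C learn"
    and "finite Xs" and "\<forall>x\<in>Xs. w x > 0"
    and "finite Uh" and "card U \<le> card Uh"
    and "learned_mapping p learn Xs w Uh Ch"
    and "x \<in> Xs" and "y \<in> Xs" and "Ch x = Ch y"
  shows "C x = C y"
proof -
  have "skel_edges p (M (C x)) = skel_edges p (M (C y))"
    using learned_mapping_skel_edges[OF assms(1-7)] assms(8-10) by metis
  moreover have "C x \<in> U" "C y \<in> U" "\<forall>u\<in>U. well_formed_skel p (M u)"
    using mcg assms(8,9) by (auto simp: meta_causal_graph_def)
  ultimately have "M (C x) = M (C y)" by (blast intro: well_formed_skel_eqI)
  then show ?thesis
    using mcg \<open>C x \<in> U\<close> \<open>C y \<in> U\<close> by (auto simp: meta_causal_graph_def)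
qed

lemma obs_equivI:
  assumes "U2 \<noteq> {}" and "C2 \<in> Xs \<rightarrow> U2"
    and "\<And>x y. x \<in> Xs \<Longrightarrow> y \<in> Xs \<Longrightarrow> C1 x = C1 y \<Longrightarrow> C2 x = C2 y"
  shows "obs_equiv Xs U1 C1 U2 C2"
proof -
  obtain u0 where "u0 \<in> U2" using assms(1) by blast
  define \<phi> where "\<phi> v = (if v \<in> C1 ` Xs then C2 (SOME x. x \<in> Xs \<and> C1 x = v) else u0)" for v
  have \<phi>_C1: "\<phi> (C1 x) = C2 x" if "x \<in> Xs" for x
  proof -
    let ?y = "SOME y. y \<in> Xs \<and> C1 y = C1 x"
    have "?y \<in> Xs \<and> C1 ?y = C1 x" by (rule someI[of _ x]) (simp add: that)
    then have "C2 ?y = C2 x" using assms(3) that by blast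
    then show ?thesis using that by (simp add: \<phi>_def)
  qed
  have "\<phi> \<in> U1 \<rightarrow> U2"
    using \<open>u0 \<in> U2\<close> \<phi>_C1 assms(2) by (auto simp: \<phi>_def Pi_iff)
  with \<phi>_C1 show ?thesis unfolding obs_equiv_def by auto
qed

theorem theorem2:
  fixes p :: nat and U :: "'u set" and M :: "'u \<Rightarrow> skeleton"
    and Xs :: "'x set" and C :: "'x \<Rightarrow> 'u" and w :: "'x \<Rightarrow> real"
    and learn :: "'x set \<Rightarrow> skeleton"
    and Uh :: "'v set" and Ch :: "'x \<Rightarrow> 'v"
  assumes "meta_causal_graph p U M Xs C"
    and "U \<noteq> {}"
    and "finite Xs"
    and "\<forall>x\<in>Xs. w x > 0"
    and "(\<Sum>x\<in>Xs. w x) = 1"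
    and "mixed_data_structure_learning p M Xs C learn"
    and "finite Uh"
    and "learned_mapping p learn Xs w Uh Ch"
    and "card Uh > card U"
  shows "obs_equiv Xs Uh Ch U C"
proof (rule obs_equivI)
  show "C \<in> Xs \<rightarrow> U" using assms(1) by (auto simp: meta_causal_graph_def)
  show "C x = C y" if "x \<in> Xs" "y \<in> Xs" "Ch x = Ch y" for x y
    using assms(9) that
    by (intro learned_mapping_separates_meta_states[OF assms(1,6,3,4,7) _ assms(8)]) simp_all
qed (rule assms(2))

end
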